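(* There exist a Stackelberg game $(G,L,F)$ and an SCE-PA $\mathbf{x}=[x_\pi]\in\mathbf{X}^{SCE\text{-}PA}$ such that there is no SCE-PA $\mathbf{x}'=[x'_\pi]\in\mathbf{X}^{SCE\text{-}PA}$ with $x'_\varnothing=x_\varnothing$ and $x'_\pi=x'_{\pi'}$ for all $\pi,\pi'\in\Pi_L$ having the same set of entries.
   Context: A finite game is $G=(N,\{S_p\}_{p\in N},\{u_p\}_{p\in N})$ with players $N=\{1,\dots,n\}$, finite nonempty strategy sets $S_p$, and utilities $u_p:S\to\mathbb{R}$ on $S=\prod_{p\in N}S_p$; write $s=(s_p,s_{-p})$ with $s_{-p}\in S_{-p}=\prod_{q\neq p}S_q$. $\mathcal{X}=\Delta(S)$ is the set of probability distributions on $S$ and $u_p(x)=\sum_{s\in S}x(s)u_p(s)$ for $x\in\mathcal{X}$. For $P\subseteq N$, $\mathcal{X}^{CE}_P$ is the set of $x\in\mathcal{X}$ such that for every $p\in P$ and all $s_p\neq s_p'\in S_p$: $\sum_{s_{-p}\in S_{-p}} x(s_p,s_{-p})\,(u_p(s_p,s_{-p})-u_p(s_p',s_{-p}))\ge 0$; $\mathcal{X}^{CE}=\mathcal{X}^{CE}_N$ is the set of correlated equilibria of $G$. A Stackelberg game (SG) is a triple $(G,L,F)$ with $L\cup F=N$ and $L\cap F=\emptyset$ (leaders and followers). For $P\subseteq N$, $\Pi_P$ is the set of ordered subsets of $P$ (finite sequences of pairwise distinct elements of $P$, including the empty sequence $\varnothing$); for $\pi\in\Pi_P$ and $p\in P$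 not occurring in $\pi$, $\pi p$ is $\pi$ with $p$ appended; when used as a set, $\pi$ means its set of entries. $\mathbf{X}=\prod_{\pi\in\Pi_L}\mathcal{X}^{CE}_{\pi\cup F}$, with elements $\mathbf{x}=[x_\pi]_{\pi\in\Pi_L}$. For $\mathbf{x}\in\mathbf{X}$ and $\pi\in\Pi_L$, $x_\pi$ is stable if $u_p(x_\pi)\ge u_p(x_{\pi p})$ for all $p\in L\setminus\pi$; $\mathbf{x}$ is stable if $x_\varnothing$ is stable, and perfectly stable if $x_\pi$ is stable for every $\pi\in\Pi_L$; $\mathbf{X}^{S}$ and $\mathbf{X}^{PS}$ denote the sets of stable and perfectly stable elements of $\mathbf{X}$. For $\mathbf{X}'\subseteq\mathbf{X}$ and $\pi\in\Pi_L$, $\mathcal{P}_{L\setminus\pi}(\mathbf{X}')$ is the set of Pareto optimal elements of $\{x'_\pi:\mathbf{x}'\in\mathbf{X}'\}$ with respect to the objectives $u_p$, $p\in L\setminus\pi$ (an element $y$ of the set is Pareto optimal if no $y'$ in the set satisfies $u_p(y')\ge u_p(y)$ for all $p\in L\setminus\pi$ with strict inequality for some such $p$). $\mathbf{x}\in\mathbf{X}$ is an SCE-PA if $\mathbf{x}\in\mathbf{X}^{PS}$ and $x_\varnothing\in\mathcal{P}_L(\mathbf{X}^{PS})$; $\mathbf{X}^{SCE\text{-}PA}$ is the set of SCE-PAs. *)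

theory Defs
  imports Complex_Main "HOL-Library.FuncSet"
begin

type_synonym profile = "nat \<Rightarrow> nat"
type_synonym utility = "nat \<Rightarrow> profile \<Rightarrow> real"
type_synonym dist = "profile \<Rightarrow> real"

definition players :: "nat \<Rightarrow> nat set" where
  "players n = {1..n}"

definition profiles :: "nat \<Rightarrow> (nat \<Rightarrow> nat set) \<Rightarrow> profile set" where
  "profiles n S = PiE (players n) S"

definition is_finite_game :: "nat \<Rightarrow> (nat \<Rightarrow> nat set) \<Rightarrow> bool" where
  "is_finite_game n S \<longleftrightarrow> n \<ge> 1 \<and> (\<forall>p\<in>players n. finite (S p) \<and> S p \<noteq> {})"

definition dists :: "nat \<Rightarrow> (nat \<Rightarrow> nat set) \<Rightarrow> dist set" where
  "dists n S = {x. (\<forall>s. 0 \<le> x s) \<and> (\<forall>s. s \<notin> profiles n S \<longrightarrow> x s = 0)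
                  \<and> (\<Sum>s\<in>profiles n S. x s) = 1}"

definition util :: "nat \<Rightarrow> (nat \<Rightarrow> nat set) \<Rightarrow> utility \<Rightarrow> nat \<Rightarrow> dist \<Rightarrow> real" where
  "util n S u p x = (\<Sum>s\<in>profiles n S. x s * u p s)"

text \<open>X^CE_P; the sum over s_{-p} is the sum over profiles s with s p = a.\<close>
definition CE_set :: "nat \<Rightarrow> (nat \<Rightarrow> nat set) \<Rightarrow> utility \<Rightarrow> nat set \<Rightarrow> dist set" where
  "CE_set n S u P = {x \<in> dists n S. \<forall>p\<in>P. \<forall>a\<in>S p. \<forall>b\<in>S p. a \<noteq> b \<longrightarrow>
      0 \<le> (\<Sum>s\<in>{s\<in>profiles n S. s p = a}. x s * (u p s - u p (s(p := b))))}"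

definition ordered_subsets :: "nat set \<Rightarrow> nat list set" where
  "ordered_subsets P = {\<pi>. distinct \<pi> \<and> set \<pi> \<subseteq> P}"

text \<open>Elements of bold X: families indexed by ordered subsets of L (values at other lists irrelevant).\<close>
definition XX :: "nat \<Rightarrow> (nat \<Rightarrow> nat set) \<Rightarrow> utility \<Rightarrow> nat set \<Rightarrow> nat set \<Rightarrow> (nat list \<Rightarrow> dist) set" where
  "XX n S u L F = {X. \<forall>\<pi>\<in>ordered_subsets L. X \<pi> \<in> CE_set n S u (set \<pi> \<union> F)}"

definition stable_at :: "nat \<Rightarrow> (nat \<Rightarrow> nat set) \<Rightarrow> utility \<Rightarrow> nat set \<Rightarrow> (nat list \<Rightarrow> dist) \<Rightarrow> nat list \<Rightarrow> bool" where
  "stable_at n S u L X \<pi> \<longleftrightarrow> (\<forall>p\<in>L - set \<pi>. util n S u p (X (\<pi> @ [p])) \<le> util n S u p (X \<pi>))"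

definition perfectly_stable :: "nat \<Rightarrow> (nat \<Rightarrow> nat set) \<Rightarrow> utility \<Rightarrow> nat set \<Rightarrow> nat set \<Rightarrow> (nat list \<Rightarrow> dist) set" where
  "perfectly_stable n S u L F = {X \<in> XX n S u L F. \<forall>\<pi>\<in>ordered_subsets L. stable_at n S u L X \<pi>}"

definition pareto_opt :: "nat \<Rightarrow> (nat \<Rightarrow> nat set) \<Rightarrow> utility \<Rightarrow> nat set \<Rightarrow> (nat list \<Rightarrow> dist) set \<Rightarrow> nat list \<Rightarrow> dist set" where
  "pareto_opt n S u L XS \<pi> =
     {y \<in> (\<lambda>X. X \<pi>) ` XS. \<not> (\<exists>y'\<in>(\<lambda>X. X \<pi>) ` XS.
        (\<forall>p\<in>L - set \<pi>. util n S u p y \<le> util n S u p y') \<and>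
        (\<exists>p\<in>L - set \<pi>. util n S u p y < util n S u p y'))}"

definition SCE_PA :: "nat \<Rightarrow> (nat \<Rightarrow> nat set) \<Rightarrow> utility \<Rightarrow> nat set \<Rightarrow> nat set \<Rightarrow> (nat list \<Rightarrow> dist) set" where
  "SCE_PA n S u L F = {X \<in> perfectly_stable n S u L F.
      X [] \<in> pareto_opt n S u L (perfectly_stable n S u L F) []}"

end

theory Submission
  imports Defs
begin

text \<open>Take three leaders, no followers and two strategies per player. For a fixed game, perfect
  stability is a finite system of linear inequalities on the family \<open>X\<close>, so both halves of the
  claim are linear programming facts. Every perfectly stable family satisfies
  \<open>u\<^sub>1 + u\<^sub>2 + 4 u\<^sub>3 \<le> 1037/70\<close> at the root, and the explicit family \<open>witness\<close> attains this
  bound, so its root is Pareto optimal. Once the root is fixed to that of \<open>witness\<close>, the extra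
  requirement \<open>X [1, 2] = X [2, 1]\<close> makes the inequalities infeasible: that one distribution must
  then satisfy the stability conditions of leader 2 after leader 1 and of leader 1 after
  leader 2 simultaneously.\<close>

definition incentive :: "nat \<Rightarrow> (nat \<Rightarrow> nat set) \<Rightarrow> utility \<Rightarrow> nat \<Rightarrow> nat \<Rightarrow> nat \<Rightarrow> dist \<Rightarrow> real" where
  "incentive n S u p a b x = (\<Sum>s\<in>{s\<in>profiles n S. s p = a}. x s * (u p s - u p (s(p := b))))"

lemma CE_set_binary_iff:
  assumes "\<And>p. p \<in> P \<Longrightarrow> S p = {0, 1}"
  shows "x \<in> CE_set n S u P \<longleftrightarrow>
    x \<in> dists n S \<and> (\<forall>p\<in>P. 0 \<le> incentive n S u p 0 1 x \<and> 0 \<le> incentive n S u p 1 0 x)"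
  using assms by (auto simp: CE_set_def incentive_def)

lemma ordered_subsets_set:
  "ordered_subsets (set xs) =
     set (filter distinct (concat (map (\<lambda>k. List.n_lists k xs) [0..<Suc (length xs)])))"
proof -
  have "length ys \<le> length xs" if "distinct ys" "set ys \<subseteq> set xs" for ys :: "nat list"
    using that by (metis card_mono card_length distinct_card finite_set order_trans)
  then show ?thesis
    by (force simp: ordered_subsets_def set_n_lists less_Suc_eq_le)
qed

lemma perfectly_stable_CE_set:
  "Z \<in> perfectly_stable n S u L F \<Longrightarrow> \<pi> \<in> ordered_subsets L \<Longrightarrow> Z \<pi> \<in> CE_set n S u (set \<pi> \<union> F)"
  by (simp add: perfectly_stable_def XX_def)

lemma perfectly_stable_dists:
  "Z \<in> perfectly_stable n S u L F \<Longrightarrow> \<pi> \<in> ordered_subsets L \<Longrightarrow> Z \<pi> \<in> dists n S"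
  using perfectly_stable_CE_set by (fastforce simp: CE_set_def)

lemma perfectly_stable_incentive:
  assumes "Z \<in> perfectly_stable n S u L F" "\<pi> \<in> ordered_subsets L" "p \<in> set \<pi> \<union> F" "S p = {0, 1}"
  shows "0 \<le> incentive n S u p 0 1 (Z \<pi>)" "0 \<le> incentive n S u p 1 0 (Z \<pi>)"
  using perfectly_stable_CE_set[OF assms(1,2)] assms(3,4)
  by (auto simp: CE_set_def incentive_def)

lemma perfectly_stable_stable:
  "Z \<in> perfectly_stable n S u L F \<Longrightarrow> \<pi> \<in> ordered_subsets L \<Longrightarrow> p \<in> L - set \<pi> \<Longrightarrow>
   util n S u p (Z (\<pi> @ [p])) \<le> util n S u p (Z \<pi>)"
  by (simp add: perfectly_stable_def stable_at_def)

lemma pareto_opt_if_maximizes_weighted_sum: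
  assumes "X \<in> XS" "finite (L - set \<pi>)" "\<And>p. p \<in> L - set \<pi> \<Longrightarrow> 0 < c p"
    and max: "\<And>Z. Z \<in> XS \<Longrightarrow>
      (\<Sum>p\<in>L - set \<pi>. c p * util n S u p (Z \<pi>)) \<le> (\<Sum>p\<in>L - set \<pi>. c p * util n S u p (X \<pi>))"
  shows "X \<pi> \<in> pareto_opt n S u L XS \<pi>"
proof -
  have "\<not> ((\<forall>p\<in>L - set \<pi>. util n S u p (X \<pi>) \<le> util n S u p (Z \<pi>)) \<and>
           (\<exists>p\<in>L - set \<pi>. util n S u p (X \<pi>) < util n S u p (Z \<pi>)))" if "Z \<in> XS" for Z
  proof
    assume "(\<forall>p\<in>L - set \<pi>. util n S u p (X \<pi>) \<le> util n S u p (Z \<pi>)) \<and>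
            (\<exists>p\<in>L - set \<pi>. util n S u p (X \<pi>) < util n S u p (Z \<pi>))"
    then have "(\<Sum>p\<in>L - set \<pi>. c p * util n S u p (X \<pi>)) < (\<Sum>p\<in>L - set \<pi>. c p * util n S u p (Z \<pi>))"
      using assms(2,3) by (intro sum_strict_mono_ex1) (auto intro: mult_left_mono)
    with max[OF that] show False by simp
  qed
  with assms(1) show ?thesis
    unfolding pareto_opt_def by blast
qed

definition binary :: "nat \<Rightarrow> nat set" where
  "binary p = {0, 1}"

definition prof :: "nat \<Rightarrow> nat \<Rightarrow> nat \<Rightarrow> profile" where
  "prof a b c = (\<lambda>i. if i = 1 then a else if i = 2 then b else if i = 3 then c else undefined)"

text \<open>Player 1 is written \<open>Suc 0\<close>, the simplifier's normal form of \<open>1 :: nat\<close>.\<close>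

lemma prof_apply [simp]: "prof a b c (Suc 0) = a" "prof a b c 2 = b" "prof a b c 3 = c"
  by (simp_all add: prof_def)

lemma prof_update [simp]:
  "(prof a b c)(Suc 0 := a') = prof a' b c" "(prof a b c)(2 := b') = prof a b' c"
  "(prof a b c)(3 := c') = prof a b c'"
  by (auto simp: prof_def)

lemma prof_eq_iff [simp]: "prof a b c = prof a' b' c' \<longleftrightarrow> a = a' \<and> b = b' \<and> c = c'"
  by (metis prof_apply)

lemma players_3: "players 3 = {1, 2, 3}"
  by (auto simp: players_def)

lemma profiles_3_binary:
  "profiles 3 binary = {prof 0 0 0, prof 0 0 1, prof 0 1 0, prof 0 1 1,
                        prof 1 0 0, prof 1 0 1, prof 1 1 0, prof 1 1 1}"
proof (intro set_eqI iffI)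
  fix s assume "s \<in> profiles 3 binary"
  then have "s = prof (s 1) (s 2) (s 3)" and "s 1 \<in> {0, 1}" "s 2 \<in> {0, 1}" "s 3 \<in> {0, 1}"
    by (auto simp: profiles_def players_3 binary_def prof_def PiE_iff extensional_def)
  then show "s \<in> {prof 0 0 0, prof 0 0 1, prof 0 1 0, prof 0 1 1,
                   prof 1 0 0, prof 1 0 1, prof 1 1 0, prof 1 1 1}" by auto
qed (auto simp: profiles_def players_3 binary_def prof_def PiE_iff extensional_def)

lemma sum_profiles_3_binary:
  "(\<Sum>s\<in>profiles 3 binary. f s) =
     f (prof 0 0 0) + f (prof 0 0 1) + f (prof 0 1 0) + f (prof 0 1 1) +
     f (prof 1 0 0) + f (prof 1 0 1) + f (prof 1 1 0) + f (prof 1 1 1)"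
  unfolding profiles_3_binary by (simp add: add.assoc)

lemma finite_profiles_3_binary: "finite (profiles 3 binary)"
  unfolding profiles_3_binary by simp

lemma sum_profiles_3_binary_filter:
  "(\<Sum>s\<in>{s\<in>profiles 3 binary. P s}. f s) = (\<Sum>s\<in>profiles 3 binary. if P s then f s else 0)"
  by (simp add: sum.inter_filter finite_profiles_3_binary)

definition profile_code :: "profile \<Rightarrow> nat" where
  "profile_code s = 4 * s 1 + 2 * s 2 + s 3"

text \<open>Row \<open>p\<close> lists the payoffs of player \<open>p\<close>, indexed by \<open>profile_code\<close>, i.e. in the order
  000, 001, \<dots>, 111 of the strategies of players 1, 2, 3.\<close>

definition payoff :: utility where
  "payoff p s = [[2, 1, 0, 0, 2, 0, 2, 0],
                 [1, 4, 4, 1, 2, 1, 3, 0],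
                 [1, 1, 2, 0, 1, 1, 1, 4]] ! (p - 1) ! profile_code s"

lemma util_payoff:
  "util 3 binary payoff 1 x =
     2 * x (prof 0 0 0) + x (prof 0 0 1) + 2 * x (prof 1 0 0) + 2 * x (prof 1 1 0)"
  "util 3 binary payoff 2 x =
     x (prof 0 0 0) + 4 * x (prof 0 0 1) + 4 * x (prof 0 1 0) + x (prof 0 1 1)
     + 2 * x (prof 1 0 0) + x (prof 1 0 1) + 3 * x (prof 1 1 0)"
  "util 3 binary payoff 3 x =
     x (prof 0 0 0) + x (prof 0 0 1) + 2 * x (prof 0 1 0) + x (prof 1 0 0)
     + x (prof 1 0 1) + x (prof 1 1 0) + 4 * x (prof 1 1 1)"
  by (simp_all add: util_def sum_profiles_3_binary payoff_def profile_code_def)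

lemma incentive_payoff:
  "incentive 3 binary payoff 1 0 1 x = x (prof 0 0 1) - 2 * x (prof 0 1 0)"
  "incentive 3 binary payoff 1 1 0 x = 2 * x (prof 1 1 0) - x (prof 1 0 1)"
  "incentive 3 binary payoff 2 0 1 x =
     3 * x (prof 0 0 1) - 3 * x (prof 0 0 0) + x (prof 1 0 1) - x (prof 1 0 0)"
  "incentive 3 binary payoff 2 1 0 x =
     3 * x (prof 0 1 0) - 3 * x (prof 0 1 1) + x (prof 1 1 0) - x (prof 1 1 1)"
  "incentive 3 binary payoff 3 0 1 x = 2 * x (prof 0 1 0) - 3 * x (prof 1 1 0)"
  "incentive 3 binary payoff 3 1 0 x = 3 * x (prof 1 1 1) - 2 * x (prof 0 1 1)"
  by (simp_all add: incentive_def sum_profiles_3_binary_filter sum_profiles_3_binary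
      payoff_def profile_code_def)

definition dist_of :: "real list \<Rightarrow> dist" where
  "dist_of w s = (if s \<in> profiles 3 binary then w ! profile_code s else 0)"

lemma dist_of_prof [simp]:
  "a \<in> {0, 1} \<Longrightarrow> b \<in> {0, 1} \<Longrightarrow> c \<in> {0, 1} \<Longrightarrow> dist_of w (prof a b c) = w ! (4 * a + 2 * b + c)"
  by (auto simp: dist_of_def profiles_3_binary profile_code_def)

lemma dist_of_in_dists:
  assumes "length w = 8" "\<forall>v\<in>set w. 0 \<le> v" "sum_list w = 1"
  shows "dist_of w \<in> dists 3 binary"
proof -
  have "profile_code s < length w" if "s \<in> profiles 3 binary" for s
    using that assms(1) by (auto simp: profiles_3_binary profile_code_def)
  then have "0 \<le> dist_of w s" for s
    using assms(2) by (simp add: dist_of_def)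
  moreover have "(\<Sum>s\<in>profiles 3 binary. dist_of w s) = (\<Sum>i<8. w ! i)"
    unfolding sum_profiles_3_binary by (simp add: eval_nat_numeral)
  moreover have "\<dots> = 1"
    using assms by (simp add: sum_list_sum_nth atLeast0LessThan)
  ultimately show ?thesis
    by (simp add: dists_def dist_of_def)
qed

lemma dists_3_binaryD:
  assumes "x \<in> dists 3 binary"
  shows "0 \<le> x (prof 0 0 0)" "0 \<le> x (prof 0 0 1)" "0 \<le> x (prof 0 1 0)" "0 \<le> x (prof 0 1 1)"
    and "0 \<le> x (prof 1 0 0)" "0 \<le> x (prof 1 0 1)" "0 \<le> x (prof 1 1 0)" "0 \<le> x (prof 1 1 1)"
    and "x (prof 0 0 0) + x (prof 0 0 1) + x (prof 0 1 0) + x (prof 0 1 1) +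
         x (prof 1 0 0) + x (prof 1 0 1) + x (prof 1 1 0) + x (prof 1 1 1) = 1"
  using assms by (auto simp: dists_def sum_profiles_3_binary)

lemma welfare_bound:
  assumes Z: "Z \<in> perfectly_stable 3 binary payoff {1, 2, 3} {}"
  shows "util 3 binary payoff 1 (Z []) + util 3 binary payoff 2 (Z []) + 4 * util 3 binary payoff 3 (Z [])
    \<le> 1037 / 70"
proof -
  have os: "[] \<in> ordered_subsets {1, 2, 3}" "[1] \<in> ordered_subsets {1, 2, 3}"
    "[2] \<in> ordered_subsets {1, 2, 3}" "[1, 2] \<in> ordered_subsets {1, 2, 3}"
    "[1, 3] \<in> ordered_subsets {1, 2, 3}"
    by (simp_all add: ordered_subsets_def)
  note inc = perfectly_stable_incentive[OF Z _ _ binary_def]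
  note d = dists_3_binaryD[OF perfectly_stable_dists[OF Z]]
  note st = perfectly_stable_stable[OF Z]
  have "0 \<le> incentive 3 binary payoff 1 0 1 (Z [1])" "0 \<le> incentive 3 binary payoff 1 1 0 (Z [1])"
    "0 \<le> incentive 3 binary payoff 2 1 0 (Z [2])"
    "0 \<le> incentive 3 binary payoff 1 0 1 (Z [1, 2])" "0 \<le> incentive 3 binary payoff 1 1 0 (Z [1, 2])"
    "0 \<le> incentive 3 binary payoff 2 0 1 (Z [1, 2])" "0 \<le> incentive 3 binary payoff 2 1 0 (Z [1, 2])"
    "0 \<le> incentive 3 binary payoff 3 1 0 (Z [1, 3])"
    by (rule inc; use os in simp)+
  moreover have "util 3 binary payoff 1 (Z [1]) \<le> util 3 binary payoff 1 (Z [])"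
    "util 3 binary payoff 2 (Z [2]) \<le> util 3 binary payoff 2 (Z [])"
    "util 3 binary payoff 2 (Z [1, 2]) \<le> util 3 binary payoff 2 (Z [1])"
    "util 3 binary payoff 3 (Z [1, 3]) \<le> util 3 binary payoff 3 (Z [1])"
    using st[OF os(1), of 1] st[OF os(1), of 2] st[OF os(2), of 2] st[OF os(2), of 3] by simp_all
  \<comment> \<open>Only the constraints with a nonzero multiplier in the dual certificate are supplied;
      with all of them the arithmetic search does not terminate in reasonable time.\<close>
  ultimately show ?thesis
    using d(1,2,4,5,6,9)[OF os(1)] d(1,5,6,9)[OF os(2)] d(2,4,5,7,9)[OF os(3)]
      d(2,4,5,9)[OF os(4)] d(3,4,9)[OF os(5)]
    unfolding util_payoff incentive_payoff by simp
qed

text \<open>The distributions are given in the order of \<open>profile_code\<close>; lists outside the table get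
  the junk value \<open>dist_of (the None)\<close>, which is never inspected.\<close>

definition witness_table :: "(nat list \<times> real list) list" where
  "witness_table =
    [([],        [0, 0, 241/1120, 0, 0, 0, 13/280, 827/1120]),
     ([1],       [0, 13/140, 13/280, 23/35, 0, 0, 0, 57/280]),
     ([2],       [1/4, 0, 0, 0, 0, 3/4, 0, 0]),
     ([3],       [0, 0, 3/17, 0, 0, 0, 5/51, 37/51]),
     ([1, 2],    [1/7, 0, 0, 0, 0, 3/7, 3/14, 3/14]),
     ([1, 3],    [0, 5/164, 0, 0, 159/164, 0, 0, 0]),
     ([2, 1],    [0, 29/82, 29/164, 29/164, 0, 6/41, 3/41, 3/41]),
     ([2, 3],    [25/56, 11/28, 0, 0, 0, 9/56, 0, 0]),
     ([3, 1],    [0, 10/51, 5/51, 36/85, 0, 0, 0, 24/85]),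
     ([3, 2],    [1/4, 0, 0, 0, 0, 3/4, 0, 0]),
     ([1, 2, 3], [0, 61/140, 61/280, 43/280, 0, 0, 0, 27/140]),
     ([1, 3, 2], [11/41, 9/41, 9/82, 9/82, 0, 6/41, 3/41, 3/41]),
     ([2, 1, 3], [11/41, 9/41, 9/82, 9/82, 0, 6/41, 3/41, 3/41]),
     ([2, 3, 1], [0, 1/7, 1/14, 1/14, 11/21, 2/21, 1/21, 1/21]),
     ([3, 1, 2], [11/50, 9/50, 9/100, 0, 0, 3/25, 3/50, 33/100]),
     ([3, 2, 1], [0, 3/10, 3/20, 3/20, 0, 1/5, 1/10, 1/10])]"

definition witness :: "nat list \<Rightarrow> dist" where
  "witness \<pi> = dist_of (the (map_of witness_table \<pi>))"

lemma ordered_subsets_123: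
  "ordered_subsets {1, 2, 3} = {[], [1], [2], [3], [1, 2], [2, 1], [1, 3], [3, 1],
     [2, 3], [3, 2], [1, 2, 3], [1, 3, 2], [2, 1, 3], [2, 3, 1], [3, 1, 2], [3, 2, 1]}"
  using ordered_subsets_set[of "[1, 2, 3]"] by (simp add: eval_nat_numeral insert_commute)

lemma witness_perfectly_stable: "witness \<in> perfectly_stable 3 binary payoff {1, 2, 3} {}"
  unfolding perfectly_stable_def XX_def stable_at_def ordered_subsets_123
  by (simp add: CE_set_binary_iff binary_def incentive_payoff[unfolded One_nat_def]
      util_payoff[unfolded One_nat_def] witness_def witness_table_def dist_of_in_dists insert_Diff_if)

lemma witness_root_pareto_opt:
  "witness [] \<in> pareto_opt 3 binary payoff {1, 2, 3} (perfectly_stable 3 binary payoff {1, 2, 3} {}) []"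
proof (rule pareto_opt_if_maximizes_weighted_sum[where c = "\<lambda>p. if p = 3 then 4 else 1"])
  have "util 3 binary payoff 1 (witness []) + util 3 binary payoff 2 (witness [])
      + 4 * util 3 binary payoff 3 (witness []) = 1037 / 70"
    unfolding util_payoff by (simp add: witness_def witness_table_def)
  then show "(\<Sum>p\<in>{1, 2, 3} - set []. (if p = 3 then 4 else 1) * util 3 binary payoff p (Z [])) \<le>
      (\<Sum>p\<in>{1, 2, 3} - set []. (if p = 3 then 4 else 1) * util 3 binary payoff p (witness []))"
    if "Z \<in> perfectly_stable 3 binary payoff {1, 2, 3} {}" for Z
    using welfare_bound[OF that] by (simp add: add.assoc)
qed (rule witness_perfectly_stable | simp)+

lemma perfectly_stable_order_dependent:
  assumes Z: "Z \<in> perfectly_stable 3 binary payoff {1, 2, 3} {}" and root: "Z [] = witness []"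
  shows "Z [2, 1] \<noteq> Z [1, 2]"
proof
  assume sym: "Z [2, 1] = Z [1, 2]"
  have os: "[] \<in> ordered_subsets {1, 2, 3}" "[1] \<in> ordered_subsets {1, 2, 3}"
    "[2] \<in> ordered_subsets {1, 2, 3}" "[1, 2] \<in> ordered_subsets {1, 2, 3}"
    "[1, 3] \<in> ordered_subsets {1, 2, 3}"
    by (simp_all add: ordered_subsets_def)
  note inc = perfectly_stable_incentive[OF Z _ _ binary_def]
  note d = dists_3_binaryD[OF perfectly_stable_dists[OF Z]]
  note st = perfectly_stable_stable[OF Z]
  have "0 \<le> incentive 3 binary payoff 1 0 1 (Z [1])" "0 \<le> incentive 3 binary payoff 1 1 0 (Z [1])"
    "0 \<le> incentive 3 binary payoff 2 0 1 (Z [2])" "0 \<le> incentive 3 binary payoff 2 1 0 (Z [2])"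
    "0 \<le> incentive 3 binary payoff 1 0 1 (Z [1, 2])" "0 \<le> incentive 3 binary payoff 1 1 0 (Z [1, 2])"
    "0 \<le> incentive 3 binary payoff 2 1 0 (Z [1, 2])"
    "0 \<le> incentive 3 binary payoff 3 1 0 (Z [1, 3])"
    by (rule inc; use os in simp)+
  moreover have "util 3 binary payoff 1 (Z [1]) \<le> util 3 binary payoff 1 (Z [])"
    "util 3 binary payoff 2 (Z [2]) \<le> util 3 binary payoff 2 (Z [])"
    "util 3 binary payoff 2 (Z [1, 2]) \<le> util 3 binary payoff 2 (Z [1])"
    "util 3 binary payoff 3 (Z [1, 3]) \<le> util 3 binary payoff 3 (Z [1])"
    "util 3 binary payoff 1 (Z [1, 2]) \<le> util 3 binary payoff 1 (Z [2])"
    using st[OF os(1), of 1] st[OF os(1), of 2] st[OF os(2), of 2] st[OF os(2), of 3]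
      st[OF os(3), of 1] sym by (simp_all add: ordered_subsets_def)
  ultimately show False
    using d(1,5,6,9)[OF os(2)] d(2,3,4,9)[OF os(3)] d(1,4,5,9)[OF os(4)] d(3,4,9)[OF os(5)]
    unfolding util_payoff incentive_payoff root by (simp add: witness_def witness_table_def)
qed

theorem mainTheorem9:
  shows "\<exists>n S u L F X.
     is_finite_game n S \<and> L \<union> F = players n \<and> L \<inter> F = {} \<and>
     X \<in> SCE_PA n S u L F \<and>
     \<not> (\<exists>X'\<in>SCE_PA n S u L F. X' [] = X [] \<and>
          (\<forall>\<pi>\<in>ordered_subsets L. \<forall>\<pi>'\<in>ordered_subsets L. set \<pi> = set \<pi>' \<longrightarrow> X' \<pi> = X' \<pi>'))"
proof (intro exI conjI)
  show "is_finite_game 3 binary"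
    by (simp add: is_finite_game_def players_3 binary_def)
  show "{1, 2, 3} \<union> {} = players 3" "{1, 2, 3} \<inter> {} = {}"
    by (simp_all add: players_3)
  show "witness \<in> SCE_PA 3 binary payoff {1, 2, 3} {}"
    unfolding SCE_PA_def using witness_perfectly_stable witness_root_pareto_opt by blast
  have "[2, 1] \<in> ordered_subsets {1, 2, 3}" "[1, 2] \<in> ordered_subsets {1, 2, 3}"
    by (simp_all add: ordered_subsets_def)
  then show "\<not> (\<exists>X'\<in>SCE_PA 3 binary payoff {1, 2, 3} {}. X' [] = witness [] \<and>
      (\<forall>\<pi>\<in>ordered_subsets {1, 2, 3}. \<forall>\<pi>'\<in>ordered_subsets {1, 2, 3}. set \<pi> = set \<pi>' \<longrightarrow> X' \<pi> = X' \<pi>'))"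
    using perfectly_stable_order_dependent unfolding SCE_PA_def by fastforce
qed

end
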